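(* Assume $f$ satisfies Hypothesis 2 (see context) and let $\xi,\xi_\eta$ be as defined in the context. Then for each $\eta\in(0,1]$ and all $s\in(0,+\infty)$: \[ |\xi_\eta(s)|\le|\xi(s)|,\qquad |\xi_\eta'(s)|\le\frac{|\xi(s)|}{s}+\frac{1}{s^2f''(s)}+\frac{2\eta|\xi(s)|}{s^2f''(s)}, \] \[ |\xi_\eta''(s)f''(s)s^2|\le2\eta|\xi_\eta'(s)|+(1+2\eta|\xi(s)|)\,\big|(\log(f''(s)s))'\big|. \]
   Context: Hypothesis 2 on $f\colon(0,\infty)\to\mathbb{R}$: (I1) $f\in C^{4,\beta}_{loc}(0,\infty)$ for some $\beta\in(0,1]$, $f''>0$; (I2) $\frac{1}{\alpha\kappa}s^\alpha\le s^2f''(s)$ for $s>0$, with $\alpha\in(0,1)$, $\kappa>0$; (I3) $|sf'''(s)/f''(s)|\le\kappa$ for $s>0$; (I4) there is $\mathcal{K}_{\inf}>0$ with $\int_\Omega f(\mu)\,dx>-\mathcal{K}_{\inf}$ for all $\mu\in\mathscr{P}^{ac}(\Omega)$, $\Omega=(0,L)$. Define $\xi(s)=-s\int_s^\infty\frac{dy}{y^3f''(y)}$ and, for $\eta\in(0,1]$, $\xi_\eta(s)=-s\exp\!\big(\int_0^s\frac{2\eta}{y^2f''(y)}dy\big)\int_s^\infty\exp\!\big(-\int_0^y\frac{2\eta}{z^2f''(z)}dz\big)\frac{dy}{y^3f''(y)}$. *)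

theory Defs
  imports "HOL-Analysis.Analysis"
begin

abbreviation dk :: "nat \<Rightarrow> (real \<Rightarrow> real) \<Rightarrow> real \<Rightarrow> real" where
  "dk k f \<equiv> (deriv ^^ k) f"

definition C4beta_loc :: "real \<Rightarrow> (real \<Rightarrow> real) \<Rightarrow> bool" where
  "C4beta_loc \<beta> f \<longleftrightarrow>
     (\<forall>k<4. \<forall>s>0. (dk k f has_real_derivative dk (Suc k) f s) (at s)) \<and>
     (\<forall>K. compact K \<and> K \<subseteq> {0<..} \<longrightarrow>
        (\<exists>C. \<forall>x\<in>K. \<forall>y\<in>K. \<bar>dk 4 f x - dk 4 f y\<bar> \<le> C * \<bar>x - y\<bar> powr \<beta>))"

text \<open>Hypothesis 2, with parameters alpha, beta, kappa, K_inf and Omega = (0,L).\<close>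
definition hypothesis2 ::
  "(real \<Rightarrow> real) \<Rightarrow> real \<Rightarrow> real \<Rightarrow> real \<Rightarrow> real \<Rightarrow> real \<Rightarrow> bool" where
  "hypothesis2 f \<alpha> \<beta> \<kappa> Kinf L \<longleftrightarrow>
     0 < \<beta> \<and> \<beta> \<le> 1 \<and> 0 < \<alpha> \<and> \<alpha> < 1 \<and> 0 < \<kappa> \<and> 0 < Kinf \<and> 0 < L \<and>
     C4beta_loc \<beta> f \<and> (\<forall>s>0. dk 2 f s > 0) \<and>
     (\<forall>s>0. s powr \<alpha> / (\<alpha> * \<kappa>) \<le> s\<^sup>2 * dk 2 f s) \<and>
     (\<forall>s>0. \<bar>s * dk 3 f s / dk 2 f s\<bar> \<le> \<kappa>) \<and>
     (\<forall>\<rho>. \<rho> \<in> borel_measurable lborel \<and> (\<forall>x\<in>{0<..<L}. 0 < \<rho> x) \<and>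
          set_integrable lborel {0<..<L} \<rho> \<and> (LINT x:{0<..<L}|lborel. \<rho> x) = 1 \<and>
          set_integrable lborel {0<..<L} (\<lambda>x. f (\<rho> x))
          \<longrightarrow> (LINT x:{0<..<L}|lborel. f (\<rho> x)) > - Kinf)"

definition xi :: "(real \<Rightarrow> real) \<Rightarrow> real \<Rightarrow> real" where
  "xi f s = - s * integral {s..} (\<lambda>y. 1 / (y ^ 3 * dk 2 f y))"

definition xi_eta :: "(real \<Rightarrow> real) \<Rightarrow> real \<Rightarrow> real \<Rightarrow> real" where
  "xi_eta f \<eta> s =
     - s * exp (integral {0..s} (\<lambda>y. 2 * \<eta> / (y\<^sup>2 * dk 2 f y)))
       * integral {s..} (\<lambda>y. exp (- integral {0..y} (\<lambda>z. 2 * \<eta> / (z\<^sup>2 * dk 2 f z)))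
                              / (y ^ 3 * dk 2 f y))"

end

theory Submission
  imports Defs
begin

text \<open>
  With \<open>\<Phi>(s) = \<integral>\<^sub>0\<^sup>s 2\<eta> / (y\<^sup>2 f''(y)) dy\<close>, differentiating the definition shows that \<open>\<xi>\<^sub>\<eta>\<close>
  solves the linear equation \<open>\<xi>\<^sub>\<eta>' = \<xi>\<^sub>\<eta> / s + (1 + 2\<eta> \<xi>\<^sub>\<eta>) / (s\<^sup>2 f'')\<close>. Since \<open>\<Phi>\<close> is
  nondecreasing, the factor \<open>exp (\<Phi>(s) - \<Phi>(y))\<close> in the integrand of \<open>\<xi>\<^sub>\<eta>(s)\<close> is at most 1
  for \<open>y \<ge> s\<close>, which gives \<open>|\<xi>\<^sub>\<eta>| \<le> |\<xi>|\<close>. The bound on \<open>\<xi>\<^sub>\<eta>'\<close> is then read off the equation,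
  and differentiating the equation once more yields
  \<open>\<xi>\<^sub>\<eta>'' f'' s\<^sup>2 = 2\<eta> \<xi>\<^sub>\<eta>' - (1 + 2\<eta> \<xi>\<^sub>\<eta>) (log (f'' s))'\<close>.
  All integrals converge because of (I2): \<open>1 / (s\<^sup>2 f''(s)) \<le> \<alpha>\<kappa> s\<^sup>-\<^sup>\<alpha>\<close> with \<open>0 < \<alpha> < 1\<close>.
\<close>

lemma integrable_on_atLeast_powr_bound:
  fixes k :: "real \<Rightarrow> real"
  assumes "0 < c" "0 < a" "continuous_on {c..} k"
    and "\<And>y. c \<le> y \<Longrightarrow> \<bar>k y\<bar> \<le> M * y powr (- 1 - a)"
  shows "k integrable_on {c..}"
proof (rule measurable_bounded_by_integrable_imp_integrable_real)
  show "k \<in> borel_measurable (lebesgue_on {c..})"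
    using assms(3) by (rule continuous_imp_measurable_on_sets_lebesgue) simp
  have "(\<lambda>y. y powr (- 1 - a)) integrable_on {c..}"
    using assms(1,2) by (intro has_integral_integrable[OF has_integral_powr_to_inf]) auto
  then show "(\<lambda>y. M * y powr (- 1 - a)) integrable_on {c..}"
    by (rule integrable_on_mult_right)
qed (use assms(4) in auto)

lemma integrable_on_0_powr_bound:
  fixes k :: "real \<Rightarrow> real"
  assumes "0 < s" "a < 1" "continuous_on {0<..s} k"
    and "\<And>y. 0 < y \<Longrightarrow> y \<le> s \<Longrightarrow> \<bar>k y\<bar> \<le> M * y powr (- a)"
  shows "k integrable_on {0..s}"
proof -
  have "k integrable_on {0<..s}"
  proof (rule measurable_bounded_by_integrable_imp_integrable_real)
    show "k \<in> borel_measurable (lebesgue_on {0<..s})"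
      using assms(3) by (rule continuous_imp_measurable_on_sets_lebesgue) simp
    have "(\<lambda>y. y powr (- a)) integrable_on {0<..s}"
      using integrable_on_powr_from_0'[of "- a" s] assms(1,2) by simp
    then show "(\<lambda>y. M * y powr (- a)) integrable_on {0<..s}"
      by (rule integrable_on_mult_right)
  qed (use assms(4) in auto)
  then show ?thesis
    by (rule integrable_spike_set) (auto intro: negligible_subset[of "{0}"])
qed

lemma integral_atLeast_split:
  fixes k :: "real \<Rightarrow> real"
  assumes "k integrable_on {c..}" "k integrable_on {u..}" "c \<le> u"
  shows "integral {c..} k = integral {c..u} k + integral {u..} k"
proof -
  have "k integrable_on {c..u}"
    using assms(1) by (rule integrable_on_subinterval) auto
  with assms(2) have "(k has_integral integral {c..u} k + integral {u..} k) ({c..u} \<union> {u..})"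
    by (intro has_integral_Un integrable_integral) (auto intro: negligible_subset[of "{u}"])
  moreover have "{c..u} \<union> {u..} = {c..}"
    using assms(3) by auto
  ultimately show ?thesis
    by (simp add: integral_unique)
qed

lemma integral_upper_has_real_derivative:
  fixes k :: "real \<Rightarrow> real"
  assumes "k integrable_on {a..b}" "a < t" "t < b" "isCont k t"
  shows "((\<lambda>u. integral {a..u} k) has_real_derivative k t) (at t)"
proof -
  have "((\<lambda>u. integral {a..u} k) has_vector_derivative k t) (at t within {a..b})"
    using integral_has_vector_derivative_continuous_at[of k a b t "{}"] assms
    by (simp add: continuous_at_imp_continuous_within)
  moreover have "at t within {a..b} = at t"
    using assms(2,3) by (intro at_within_interior) auto
  ultimately show ?thesis
    by (simp add: has_real_derivative_iff_has_vector_derivative)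
qed

lemma integral_atLeast_has_real_derivative:
  fixes k :: "real \<Rightarrow> real"
  assumes "\<And>u. c < u \<Longrightarrow> k integrable_on {u..}" "c < t" "isCont k t"
  shows "((\<lambda>u. integral {u..} k) has_real_derivative - k t) (at t)"
proof -
  define c' where "c' = (c + t) / 2"
  have "c < c'" "c' < t"
    using assms(2) by (auto simp: c'_def)
  have "k integrable_on {c'..t + 1}"
    using assms(1)[OF \<open>c < c'\<close>] by (rule integrable_on_subinterval) auto
  then have "((\<lambda>u. integral {c'..} k - integral {c'..u} k) has_real_derivative - k t) (at t)"
    using \<open>c' < t\<close> assms(3)
    by (auto intro!: derivative_eq_intros integral_upper_has_real_derivative)
  then show ?thesis
  proof (rule has_field_derivative_transform_within_open[where S = "{c'<..}"])
    fix u
    assume "u \<in> {c'<..}"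
    then show "integral {c'..} k - integral {c'..u} k = integral {u..} k"
      using integral_atLeast_split[of k c' u] assms(1) \<open>c < c'\<close> by auto
  qed (use \<open>c' < t\<close> in auto)
qed

locale xi_eta_setting =
  fixes f :: "real \<Rightarrow> real" and \<eta> a M :: real
  assumes has_real_derivative_dk2: "\<And>t. 0 < t \<Longrightarrow> (dk 2 f has_real_derivative dk 3 f t) (at t)"
    and dk2_pos: "\<And>t. 0 < t \<Longrightarrow> 0 < dk 2 f t"
    and dk2_growth: "\<And>t. 0 < t \<Longrightarrow> 1 / (t\<^sup>2 * dk 2 f t) \<le> M * t powr (- a)"
    and exponent_pos: "0 < a" and exponent_less_1: "a < 1"
    and eta_pos: "0 < \<eta>"
begin

definition Phi_integrand :: "real \<Rightarrow> real" where
  "Phi_integrand y = 2 * \<eta> / (y\<^sup>2 * dk 2 f y)"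

definition Phi :: "real \<Rightarrow> real" where
  "Phi t = integral {0..t} Phi_integrand"

definition xi_integrand :: "real \<Rightarrow> real" where
  "xi_integrand y = 1 / (y ^ 3 * dk 2 f y)"

definition xi_eta_integrand :: "real \<Rightarrow> real" where
  "xi_eta_integrand y = exp (- Phi y) * xi_integrand y"

lemma xi_eq: "xi f s = - s * integral {s..} xi_integrand"
  by (simp add: xi_def xi_integrand_def[abs_def])

lemma xi_eta_eq: "xi_eta f \<eta> = (\<lambda>s. - s * exp (Phi s) * integral {s..} xi_eta_integrand)"
  by (simp add: fun_eq_iff xi_eta_def Phi_def Phi_integrand_def[abs_def] xi_eta_integrand_def[abs_def]
      xi_integrand_def)

lemma isCont_dk2: "0 < t \<Longrightarrow> isCont (dk 2 f) t"
  using has_real_derivative_dk2 by (rule DERIV_isCont)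

lemma Phi_integrand_nonneg: "0 \<le> y \<Longrightarrow> 0 \<le> Phi_integrand y"
  using dk2_pos[of y] eta_pos by (cases "y = 0") (auto simp: Phi_integrand_def)

lemma isCont_Phi_integrand: "0 < t \<Longrightarrow> isCont Phi_integrand t"
  unfolding Phi_integrand_def[abs_def] using isCont_dk2 dk2_pos
  by (intro continuous_intros) (auto simp: less_imp_neq[symmetric])

lemma Phi_integrand_integrable: "0 < t \<Longrightarrow> Phi_integrand integrable_on {0..t}"
proof (rule integrable_on_0_powr_bound[OF _ exponent_less_1])
  show "continuous_on {0<..t} Phi_integrand"
    using isCont_Phi_integrand by (intro continuous_at_imp_continuous_on) simp
  fix y :: real
  assume "0 < y"
  then have "\<bar>Phi_integrand y\<bar> = 2 * \<eta> * (1 / (y\<^sup>2 * dk 2 f y))"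
    using dk2_pos[of y] eta_pos by (simp add: Phi_integrand_def)
  also have "\<dots> \<le> 2 * \<eta> * (M * y powr (- a))"
    using dk2_growth[OF \<open>0 < y\<close>] eta_pos by (intro mult_left_mono) auto
  finally show "\<bar>Phi_integrand y\<bar> \<le> (2 * \<eta> * M) * y powr (- a)"
    by simp
qed

lemma Phi_has_real_derivative: "0 < t \<Longrightarrow> (Phi has_real_derivative Phi_integrand t) (at t)"
  unfolding Phi_def[abs_def]
  by (rule integral_upper_has_real_derivative[where b = "t + 1"])
     (auto intro: Phi_integrand_integrable isCont_Phi_integrand)

lemma isCont_Phi: "0 < t \<Longrightarrow> isCont Phi t"
  using Phi_has_real_derivative by (rule DERIV_isCont)

lemma Phi_mono:
  assumes "0 < t" "t \<le> y"
  shows "Phi t \<le> Phi y"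
proof -
  have "Phi_integrand integrable_on {t..y}"
    using assms by (intro integrable_subinterval_real[OF Phi_integrand_integrable[of y]]) auto
  then have "0 \<le> integral {t..y} Phi_integrand"
    using assms Phi_integrand_nonneg by (intro integral_nonneg) auto
  moreover have "Phi y = Phi t + integral {t..y} Phi_integrand"
    unfolding Phi_def using assms Phi_integrand_integrable[of y]
    by (simp add: Henstock_Kurzweil_Integration.integral_combine)
  ultimately show ?thesis
    by simp
qed

lemma xi_integrand_pos: "0 < y \<Longrightarrow> 0 < xi_integrand y"
  using dk2_pos by (simp add: xi_integrand_def)

lemma isCont_xi_integrand: "0 < y \<Longrightarrow> isCont xi_integrand y"
  unfolding xi_integrand_def[abs_def] using isCont_dk2 dk2_pos
  by (intro continuous_intros) (auto simp: less_imp_neq[symmetric])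

lemma xi_integrand_le: "0 < y \<Longrightarrow> xi_integrand y \<le> M * y powr (- 1 - a)"
proof -
  assume "0 < y"
  then have "xi_integrand y = 1 / (y\<^sup>2 * dk 2 f y) / y"
    by (simp add: xi_integrand_def power_def field_simps)
  also have "\<dots> \<le> M * y powr (- a) / y"
    using dk2_growth[OF \<open>0 < y\<close>] \<open>0 < y\<close> by (intro divide_right_mono) auto
  also have "\<dots> = M * y powr (- 1 - a)"
    using \<open>0 < y\<close> by (simp add: powr_diff powr_minus field_simps)
  finally show ?thesis .
qed

lemma xi_integrand_integrable: "0 < c \<Longrightarrow> xi_integrand integrable_on {c..}"
proof (rule integrable_on_atLeast_powr_bound[OF _ exponent_pos])
  assume "0 < c"
  then show "continuous_on {c..} xi_integrand"
    using isCont_xi_integrand by (intro continuous_at_imp_continuous_on) auto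
  fix y
  assume "c \<le> y"
  then show "\<bar>xi_integrand y\<bar> \<le> M * y powr (- 1 - a)"
    using \<open>0 < c\<close> xi_integrand_pos[of y] xi_integrand_le[of y] by (simp add: abs_of_pos)
qed

lemma xi_eta_integrand_nonneg: "0 < y \<Longrightarrow> 0 \<le> xi_eta_integrand y"
  using xi_integrand_pos[of y] by (simp add: xi_eta_integrand_def)

lemma xi_eta_integrand_le:
  assumes "0 < s" "s \<le> y"
  shows "exp (Phi s) * xi_eta_integrand y \<le> xi_integrand y"
proof -
  have "exp (Phi s) * xi_eta_integrand y = exp (Phi s - Phi y) * xi_integrand y"
    by (simp add: xi_eta_integrand_def exp_diff exp_minus field_simps)
  also have "\<dots> \<le> 1 * xi_integrand y"
    using Phi_mono[OF assms] xi_integrand_pos[of y] assms by (intro mult_right_mono) auto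
  finally show ?thesis
    by simp
qed

lemma isCont_xi_eta_integrand: "0 < y \<Longrightarrow> isCont xi_eta_integrand y"
  unfolding xi_eta_integrand_def[abs_def] using isCont_xi_integrand isCont_Phi
  by (intro continuous_intros) auto

lemma xi_eta_integrand_integrable: "0 < c \<Longrightarrow> xi_eta_integrand integrable_on {c..}"
proof (rule integrable_on_atLeast_powr_bound[OF _ exponent_pos])
  assume "0 < c"
  then show "continuous_on {c..} xi_eta_integrand"
    using isCont_xi_eta_integrand by (intro continuous_at_imp_continuous_on) auto
  fix y
  assume "c \<le> y"
  have "xi_eta_integrand y = exp (- Phi c) * (exp (Phi c) * xi_eta_integrand y)"
    by (simp add: exp_minus)
  also have "\<dots> \<le> exp (- Phi c) * (M * y powr (- 1 - a))"
    using \<open>0 < c\<close> \<open>c \<le> y\<close> xi_eta_integrand_le[of c y] xi_integrand_le[of y]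
    by (intro mult_left_mono) auto
  finally show "\<bar>xi_eta_integrand y\<bar> \<le> (exp (- Phi c) * M) * y powr (- 1 - a)"
    using \<open>0 < c\<close> \<open>c \<le> y\<close> xi_eta_integrand_nonneg[of y] by simp
qed

lemma xi_eta_has_real_derivative:
  assumes "0 < s"
  shows "(xi_eta f \<eta> has_real_derivative
          xi_eta f \<eta> s / s + (1 + 2 * \<eta> * xi_eta f \<eta> s) / (s\<^sup>2 * dk 2 f s)) (at s)"
proof -
  let ?I = "integral {s..} xi_eta_integrand"
  have "(xi_eta f \<eta> has_real_derivative
          - exp (Phi s) * ?I - s * (exp (Phi s) * Phi_integrand s) * ?I
            + s * exp (Phi s) * xi_eta_integrand s) (at s)"
    unfolding xi_eta_eq using assms
    by (auto intro!: derivative_eq_intros Phi_has_real_derivative xi_eta_integrand_integrable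
        integral_atLeast_has_real_derivative[where c = 0]
        isCont_xi_eta_integrand simp: algebra_simps)
  moreover have "s * exp (Phi s) * xi_eta_integrand s = 1 / (s\<^sup>2 * dk 2 f s)"
    using assms dk2_pos[OF assms]
    by (simp add: xi_eta_integrand_def xi_integrand_def exp_minus field_simps power2_eq_square power3_eq_cube)
  ultimately show ?thesis
    using assms dk2_pos[OF assms] unfolding xi_eta_eq
    by (elim DERIV_cong) (simp add: Phi_integrand_def field_simps power2_eq_square)
qed

lemma deriv_xi_eta:
  "0 < s \<Longrightarrow> deriv (xi_eta f \<eta>) s = xi_eta f \<eta> s / s + (1 + 2 * \<eta> * xi_eta f \<eta> s) / (s\<^sup>2 * dk 2 f s)"
  using xi_eta_has_real_derivative by (rule DERIV_imp_deriv)

lemma abs_xi_eta_le: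
  assumes "0 < s"
  shows "\<bar>xi_eta f \<eta> s\<bar> \<le> \<bar>xi f s\<bar>"
proof -
  have "exp (Phi s) * integral {s..} xi_eta_integrand = integral {s..} (\<lambda>y. exp (Phi s) * xi_eta_integrand y)"
    using xi_eta_integrand_integrable[OF assms] by (rule integral_mult)
  also have "\<dots> \<le> integral {s..} xi_integrand"
    using assms xi_eta_integrand_integrable[OF assms] xi_integrand_integrable[OF assms]
    by (intro integral_le integrable_on_mult_right xi_eta_integrand_le) auto
  finally have "exp (Phi s) * integral {s..} xi_eta_integrand \<le> integral {s..} xi_integrand" .
  moreover have "0 \<le> integral {s..} xi_eta_integrand"
    using assms xi_eta_integrand_integrable[OF assms] xi_eta_integrand_nonneg
    by (intro integral_nonneg) auto
  ultimately show ?thesis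
    using assms by (simp add: xi_eq xi_eta_eq abs_mult)
qed

lemma abs_deriv_xi_eta_le:
  assumes "0 < s"
  shows "\<bar>deriv (xi_eta f \<eta>) s\<bar>
           \<le> \<bar>xi f s\<bar> / s + 1 / (s\<^sup>2 * dk 2 f s) + 2 * \<eta> * \<bar>xi f s\<bar> / (s\<^sup>2 * dk 2 f s)"
proof -
  define w where "w = 1 / (s\<^sup>2 * dk 2 f s)"
  have "0 < w"
    using assms dk2_pos[OF assms] by (simp add: w_def)
  have "deriv (xi_eta f \<eta>) s = xi_eta f \<eta> s / s + w + 2 * \<eta> * w * xi_eta f \<eta> s"
    using deriv_xi_eta[OF assms] by (simp add: w_def add_divide_distrib)
  also have "\<bar>\<dots>\<bar> \<le> \<bar>xi_eta f \<eta> s\<bar> / s + w + 2 * \<eta> * w * \<bar>xi_eta f \<eta> s\<bar>"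
  proof -
    have "\<bar>xi_eta f \<eta> s / s\<bar> = \<bar>xi_eta f \<eta> s\<bar> / s"
      "\<bar>2 * \<eta> * w * xi_eta f \<eta> s\<bar> = 2 * \<eta> * w * \<bar>xi_eta f \<eta> s\<bar>"
      using assms \<open>0 < w\<close> eta_pos by (simp_all add: abs_mult)
    then show ?thesis
      using \<open>0 < w\<close> by linarith
  qed
  also have "\<dots> \<le> \<bar>xi f s\<bar> / s + w + 2 * \<eta> * w * \<bar>xi f s\<bar>"
    using assms \<open>0 < w\<close> eta_pos abs_xi_eta_le[OF assms]
    by (intro add_mono divide_right_mono mult_left_mono) auto
  finally show ?thesis
    by (simp add: w_def)
qed

lemma deriv_ln_dk2: "0 < s \<Longrightarrow> deriv (\<lambda>t. ln (dk 2 f t * t)) s = dk 3 f s / dk 2 f s + 1 / s"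
  using dk2_pos[of s]
  by (intro DERIV_imp_deriv) (auto intro!: derivative_eq_intros has_real_derivative_dk2 simp: field_simps)

lemma deriv_xi_eta_has_real_derivative:
  assumes "0 < s"
  shows "(deriv (xi_eta f \<eta>) has_real_derivative
          (2 * \<eta> * deriv (xi_eta f \<eta>) s - (1 + 2 * \<eta> * xi_eta f \<eta> s) * (dk 3 f s / dk 2 f s + 1 / s))
            / (s\<^sup>2 * dk 2 f s)) (at s)"
proof -
  let ?X = "xi_eta f \<eta>"
  have "((\<lambda>t. ?X t / t + (1 + 2 * \<eta> * ?X t) / (t\<^sup>2 * dk 2 f t)) has_real_derivative
          (2 * \<eta> * deriv ?X s - (1 + 2 * \<eta> * ?X s) * (dk 3 f s / dk 2 f s + 1 / s))
            / (s\<^sup>2 * dk 2 f s)) (at s)"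
    using assms dk2_pos[OF assms]
    by (auto intro!: derivative_eq_intros xi_eta_has_real_derivative has_real_derivative_dk2
        simp: deriv_xi_eta field_simps power2_eq_square)
  then show ?thesis
    by (rule has_field_derivative_transform_within_open[where S = "{0<..}"])
       (use assms deriv_xi_eta in auto)
qed

lemma abs_second_deriv_xi_eta_le:
  assumes "0 < s"
  shows "\<bar>deriv (deriv (xi_eta f \<eta>)) s * dk 2 f s * s\<^sup>2\<bar>
           \<le> 2 * \<eta> * \<bar>deriv (xi_eta f \<eta>) s\<bar>
             + (1 + 2 * \<eta> * \<bar>xi f s\<bar>) * \<bar>deriv (\<lambda>t. ln (dk 2 f t * t)) s\<bar>"
proof -
  let ?X = "xi_eta f \<eta>" and ?L = "deriv (\<lambda>t. ln (dk 2 f t * t)) s"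
  have "deriv (deriv ?X) s * dk 2 f s * s\<^sup>2 = 2 * \<eta> * deriv ?X s - (1 + 2 * \<eta> * ?X s) * ?L"
    using DERIV_imp_deriv[OF deriv_xi_eta_has_real_derivative[OF assms]] deriv_ln_dk2[OF assms]
      assms dk2_pos[OF assms] by simp
  moreover have "\<bar>2 * \<eta> * ?X s\<bar> \<le> 2 * \<eta> * \<bar>xi f s\<bar>"
    using abs_xi_eta_le[OF assms] eta_pos by (simp add: abs_mult)
  then have "\<bar>1 + 2 * \<eta> * ?X s\<bar> \<le> 1 + 2 * \<eta> * \<bar>xi f s\<bar>"
    using abs_triangle_ineq[of 1 "2 * \<eta> * ?X s"] by simp
  then have "\<bar>(1 + 2 * \<eta> * ?X s) * ?L\<bar> \<le> (1 + 2 * \<eta> * \<bar>xi f s\<bar>) * \<bar>?L\<bar>"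
    by (simp add: abs_mult mult_right_mono)
  moreover have "\<bar>2 * \<eta> * deriv ?X s\<bar> = 2 * \<eta> * \<bar>deriv ?X s\<bar>"
    using eta_pos by (simp add: abs_mult)
  ultimately show ?thesis
    using abs_triangle_ineq4[of "2 * \<eta> * deriv ?X s" "(1 + 2 * \<eta> * ?X s) * ?L"] by linarith
qed

end

theorem proposition3p1:
  fixes f :: "real \<Rightarrow> real" and \<alpha> \<beta> \<kappa> Kinf L \<eta> s :: real
  assumes "hypothesis2 f \<alpha> \<beta> \<kappa> Kinf L"
    and "0 < \<eta>" and "\<eta> \<le> 1" and "0 < s"
  shows "xi_eta f \<eta> differentiable (at s) \<and>
         deriv (xi_eta f \<eta>) differentiable (at s) \<and>
         \<bar>xi_eta f \<eta> s\<bar> \<le> \<bar>xi f s\<bar> \<and>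
         \<bar>deriv (xi_eta f \<eta>) s\<bar> \<le> \<bar>xi f s\<bar> / s + 1 / (s\<^sup>2 * dk 2 f s)
           + 2 * \<eta> * \<bar>xi f s\<bar> / (s\<^sup>2 * dk 2 f s) \<and>
         \<bar>deriv (deriv (xi_eta f \<eta>)) s * dk 2 f s * s\<^sup>2\<bar>
           \<le> 2 * \<eta> * \<bar>deriv (xi_eta f \<eta>) s\<bar>
             + (1 + 2 * \<eta> * \<bar>xi f s\<bar>) * \<bar>deriv (\<lambda>t. ln (dk 2 f t * t)) s\<bar>"
proof -
  have "0 < \<alpha>" "\<alpha> < 1" "0 < \<kappa>"
    and derivs: "\<forall>k<4. \<forall>t>0. (dk k f has_real_derivative dk (Suc k) f t) (at t)"
    and pos: "\<forall>t>0. 0 < dk 2 f t"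
    and growth: "\<forall>t>0. t powr \<alpha> / (\<alpha> * \<kappa>) \<le> t\<^sup>2 * dk 2 f t"
    using assms(1) unfolding hypothesis2_def C4beta_loc_def by auto
  \<comment> \<open>Only (I1) up to \<open>f'''\<close> and (I2) enter.\<close>
  interpret xi_eta_setting f \<eta> \<alpha> "\<alpha> * \<kappa>"
  proof
    fix t :: real
    assume "0 < t"
    show "(dk 2 f has_real_derivative dk 3 f t) (at t)"
      using derivs[rule_format, of 2 t] \<open>0 < t\<close> by (simp add: numeral_eq_Suc)
    show "0 < dk 2 f t"
      using pos \<open>0 < t\<close> by simp
    have "1 / (t\<^sup>2 * dk 2 f t) \<le> 1 / (t powr \<alpha> / (\<alpha> * \<kappa>))"
      using growth pos \<open>0 < t\<close> \<open>0 < \<alpha>\<close> \<open>0 < \<kappa>\<close> by (intro divide_left_mono) auto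
    then show "1 / (t\<^sup>2 * dk 2 f t) \<le> \<alpha> * \<kappa> * t powr (- \<alpha>)"
      using \<open>0 < t\<close> by (simp add: powr_minus field_simps)
  qed (use \<open>0 < \<alpha>\<close> \<open>\<alpha> < 1\<close> assms(2) in auto)
  show ?thesis
    using xi_eta_has_real_derivative deriv_xi_eta_has_real_derivative abs_xi_eta_le
      abs_deriv_xi_eta_le abs_second_deriv_xi_eta_le assms(4)
    unfolding real_differentiable_def by blast
qed

end
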